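(* Let $\mathbf{A}$ be an $n\times n$ skew-symmetric matrix over a field $K$ and $\mathbf{v}\in K^n$. Let \[\mathbf{A}_{\mathbf{v}}=\begin{pmatrix}\mathbf{A}&\mathbf{v}\\-\mathbf{v}^T&0\end{pmatrix},\] an $(n+1)\times(n+1)$ matrix. Then for every $I\subseteq[n]$, \[\det\bigl((\mathbf{A}+\mathbf{v}\mathbf{v}^T)[I]\bigr)=\det\bigl(\mathbf{A}_{\mathbf{v}}[\alpha(I)]\bigr),\] where $\alpha(I)=I$ if $|I|$ is even and $\alpha(I)=I\cup\{n+1\}$ if $|I|$ is odd.
   Context: A matrix is skew-symmetric if $\mathbf{A}_{ij}=-\mathbf{A}_{ji}$ for all $i,j$ and $\mathbf{A}_{ii}=0$ for all $i$. $\mathbf{M}[X]$ denotes the principal submatrix indexed by $X$, with $\det(\mathbf{M}[\emptyset])=1$. *)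

theory Defs
  imports "Jordan_Normal_Form.Determinant" "Jordan_Normal_Form.DL_Submatrix"
begin

(* Indices are 0-based: [n] is {0..<n}; the extra index n+1 of the paper is index n here. *)

definition skew_symmetric :: "'a::field mat \<Rightarrow> bool" where
  "skew_symmetric A \<longleftrightarrow> square_mat A \<and>
     (\<forall>i<dim_row A. \<forall>j<dim_row A. A $$ (i,j) = - A $$ (j,i)) \<and>
     (\<forall>i<dim_row A. A $$ (i,i) = 0)"

(* principal submatrix M[X]; M[{}] is the 0x0 matrix, whose determinant is 1 *)
definition principal_submatrix :: "'a mat \<Rightarrow> nat set \<Rightarrow> 'a mat" where
  "principal_submatrix M X = submatrix M X X"

definition bordered_mat :: "'a::field mat \<Rightarrow> 'a vec \<Rightarrow> 'a mat" where
  "bordered_mat A v = four_block_mat A (mat_of_cols (dim_row A) [v])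
                        (mat_of_rows (dim_row A) [- v]) (0\<^sub>m 1 1)"

definition alpha :: "nat \<Rightarrow> nat set \<Rightarrow> nat set" where
  "alpha n I = (if even (card I) then I else insert n I)"

end

theory Submission
  imports Defs "HOL-Library.Disjoint_Sets" "HOL-Library.Numeral_Type"
begin

(* Write B = A[I] and w = v[I].  Then (A + v v^T)[I] = B + w w^T, A_v[I] = B, and
   A_v[I \<union> {n}] = B_w.  The matrix [[B, w], [-w^T, 1]] has Schur complement B + w w^T, and
   expanding it along the last column gives det (B + w w^T) = det B_w + det B.  Both B and B_w
   are skew-symmetric with zero diagonal, and exactly one of them has odd order, so its
   determinant vanishes: permutations with a fixed point contribute nothing, and the remaining
   ones pair off with their inverses, whose terms differ by the factor (-1)^m = -1.  Pairing
   rather than comparing det A with det A^T makes the argument valid in characteristic 2. *)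

lemma even_card_if_fixpoint_free_involution:
  assumes "\<And>x. x \<in> X \<Longrightarrow> h x \<in> X" "\<And>x. x \<in> X \<Longrightarrow> h (h x) = x"
    and "\<And>x. x \<in> X \<Longrightarrow> h x \<noteq> x"
  shows "even (card X)"
proof -
  \<comment> \<open>count in the two-element ring, where each pair contributes 1 + 1 = 0\<close>
  have "(\<Sum>x\<in>X. 1 :: 2) = 0"
    by (rule sum_involution_eq_0[of X _ h]) (use assms in auto)
  then show ?thesis
    by (simp add: of_nat_eq_0_iff_char_dvd)
qed

lemma inv_neq_if_fixpoint_free_odd:
  assumes p: "p permutes S" and "odd (card S)" and fixpoint_free: "\<And>x. x \<in> S \<Longrightarrow> p x \<noteq> x"
  shows "Hilbert_Choice.inv p \<noteq> p"
proof
  assume inv_eq: "Hilbert_Choice.inv p = p"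
  have "even (card S)"
  proof (rule even_card_if_fixpoint_free_involution[where h = p])
    fix x assume "x \<in> S"
    then show "p x \<in> S" "p x \<noteq> x"
      using permutes_in_image[OF p] fixpoint_free by auto
    show "p (p x) = x"
      using permutes_inverses(2)[OF p, of x] inv_eq by simp
  qed
  with \<open>odd (card S)\<close> show False by simp
qed

lemma prod_skew_inv_permutation:
  fixes B :: "'a::comm_ring_1 mat"
  assumes skew: "\<And>i j. i < m \<Longrightarrow> j < m \<Longrightarrow> B $$ (i,j) = - B $$ (j,i)"
    and p: "p permutes {0..<m}"
  shows "(\<Prod>i = 0..<m. B $$ (i, Hilbert_Choice.inv p i))
    = (-1) ^ m * (\<Prod>i = 0..<m. B $$ (i, p i))"
proof -
  have "(\<Prod>i = 0..<m. B $$ (i, Hilbert_Choice.inv p i))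
      = (\<Prod>i = 0..<m. B $$ (p i, Hilbert_Choice.inv p (p i)))"
    using prod.reindex_bij_betw[OF permutes_imp_bij[OF p], of "\<lambda>i. B $$ (i, Hilbert_Choice.inv p i)"]
    by simp
  also have "\<dots> = (\<Prod>i = 0..<m. - B $$ (i, p i))"
  proof (rule prod.cong)
    fix i assume i: "i \<in> {0..<m}"
    then have "p i < m"
      using permutes_in_image[OF p] by simp
    then show "B $$ (p i, Hilbert_Choice.inv p (p i)) = - B $$ (i, p i)"
      using skew[of "p i" i] i by (simp add: permutes_inverses(2)[OF p])
  qed simp
  also have "\<dots> = (-1) ^ m * (\<Prod>i = 0..<m. B $$ (i, p i))"
    by (simp add: prod_uminus)
  finally show ?thesis .
qed

lemma det_alternating_odd_eq_0:
  fixes B :: "'a::comm_ring_1 mat"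
  assumes B: "B \<in> carrier_mat m m" and odd: "odd m"
    and skew: "\<And>i j. i < m \<Longrightarrow> j < m \<Longrightarrow> B $$ (i,j) = - B $$ (j,i)"
    and diag: "\<And>i. i < m \<Longrightarrow> B $$ (i,i) = 0"
  shows "det B = 0"
proof -
  define f where "f p = signof p * (\<Prod>i = 0..<m. B $$ (i, p i))" for p
  define P0 where "P0 = {p. p permutes {0..<m} \<and> (\<exists>i<m. p i = i)}"
  define P1 where "P1 = {p. p permutes {0..<m} \<and> (\<forall>i<m. p i \<noteq> i)}"
  have "{p. p permutes {0..<m}} = P0 \<union> P1" "P0 \<inter> P1 = {}"
    unfolding P0_def P1_def by auto
  moreover have "finite {p. p permutes {0..<m}}"
    by (simp add: finite_permutations)
  ultimately have "det B = sum f P0 + sum f P1"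
    unfolding det_def'[OF B] f_def by (simp add: sum.union_disjoint)
  moreover have "sum f P0 = 0"
  proof (intro sum.neutral ballI)
    fix p assume "p \<in> P0"
    then obtain i where "i < m" "p i = i"
      unfolding P0_def by auto
    then have "(\<Prod>j = 0..<m. B $$ (j, p j)) = 0"
      using diag by (intro prod_zero) (auto intro!: bexI[of _ i])
    then show "f p = 0"
      by (simp add: f_def)
  qed
  moreover have "sum f P1 = 0"
  proof (rule sum_involution_eq_0[where h = Hilbert_Choice.inv])
    fix p assume "p \<in> P1"
    then have p: "p permutes {0..<m}" and derangement: "\<And>i. i < m \<Longrightarrow> p i \<noteq> i"
      unfolding P1_def by auto
    have "Hilbert_Choice.inv p i \<noteq> i" if "i < m" for i
      using derangement that by (metis permutes_inverses(1)[OF p])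
    then show "Hilbert_Choice.inv p \<in> P1"
      using permutes_inv[OF p] by (simp add: P1_def)
    show "Hilbert_Choice.inv (Hilbert_Choice.inv p) = p"
      using inv_inv_eq[OF permutes_bij[OF p]] .
    show "Hilbert_Choice.inv p \<noteq> p"
      using inv_neq_if_fixpoint_free_odd[OF p] odd derangement by simp
    have "sign (Hilbert_Choice.inv p) = sign p"
      using sign_inverse[OF permutes_imp_permutation[OF _ p]] by simp
    then show "f (Hilbert_Choice.inv p) + f p = 0"
      using odd by (simp add: f_def prod_skew_inv_permutation[OF skew p])
  qed
  ultimately show ?thesis by simp
qed

lemma skew_symmetricI:
  assumes "A \<in> carrier_mat n n"
    and "\<And>i j. i < n \<Longrightarrow> j < n \<Longrightarrow> A $$ (i, j) = - A $$ (j, i)"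
    and "\<And>i. i < n \<Longrightarrow> A $$ (i, i) = 0"
  shows "skew_symmetric A"
proof -
  have "square_mat A"
    using assms(1) by simp
  with assms(2,3) show ?thesis
    unfolding skew_symmetric_def carrier_matD(1)[OF assms(1)] by blast
qed

lemma skew_symmetricD:
  assumes "skew_symmetric A" "A \<in> carrier_mat n n"
  shows "i < n \<Longrightarrow> j < n \<Longrightarrow> A $$ (i, j) = - A $$ (j, i)"
    and "i < n \<Longrightarrow> A $$ (i, i) = 0"
  using assms(1) unfolding skew_symmetric_def carrier_matD(1)[OF assms(2)] by blast+

lemma det_skew_symmetric_odd_eq_0:
  assumes "A \<in> carrier_mat n n" "skew_symmetric A" "odd n"
  shows "det A = 0"
  using det_alternating_odd_eq_0[OF assms(1,3)] skew_symmetricD[OF assms(2,1)] by blast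

lemma det_four_block_mat_corner_one:
  fixes B :: "'a::idom mat"
  assumes B: "B \<in> carrier_mat k k" and c: "c \<in> carrier_mat k 1" and r: "r \<in> carrier_mat 1 k"
  shows "det (four_block_mat B c (- r) (1\<^sub>m 1)) = det (B + c * r)"
proof -
  define M where "M = four_block_mat B c (- r) (1\<^sub>m 1)"
  define E where "E = four_block_mat (1\<^sub>m k) (0\<^sub>m k 1) r (1\<^sub>m 1)"
  have M: "M \<in> carrier_mat (k + 1) (k + 1)" and E: "E \<in> carrier_mat (k + 1) (k + 1)"
    unfolding M_def E_def using B by auto
  have "- r \<in> carrier_mat 1 k"
    using r by simp
  from mult_four_block_mat[OF B c this one_carrier_mat one_carrier_mat zero_carrier_mat r one_carrier_mat]
  have "M * E = four_block_mat (B + c * r) c (0\<^sub>m 1 k) (1\<^sub>m 1)"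
    unfolding M_def E_def using B c r by simp
  then have "det (M * E) = det (B + c * r)"
    using B c r by (simp add: det_four_block_mat_lower_left_zero[where n = k and m = 1])
  moreover have "det E = 1"
    unfolding E_def using r by (subst det_four_block_mat_upper_right_zero[where n = k and m = 1]) auto
  ultimately show ?thesis
    using det_mult[OF M E] by (simp add: M_def)
qed

lemma det_four_block_mat_corner_split:
  fixes B :: "'a::comm_ring_1 mat"
  assumes B: "B \<in> carrier_mat k k" and c: "c \<in> carrier_mat k 1" and r: "r \<in> carrier_mat 1 k"
  shows "det (four_block_mat B c r (1\<^sub>m 1)) = det (four_block_mat B c r (0\<^sub>m 1 1)) + det B"
proof -
  define M where "M = four_block_mat B c r (1\<^sub>m 1)"
  define C where "C = four_block_mat B c r (0\<^sub>m 1 1)"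
  have M: "M \<in> carrier_mat (k + 1) (k + 1)" and C: "C \<in> carrier_mat (k + 1) (k + 1)"
    unfolding M_def C_def using B by auto
  have same_entries: "M $$ (i, j) = C $$ (i, j)" if "i < k + 1" "j < k + 1" "i \<noteq> k \<or> j \<noteq> k" for i j
    unfolding M_def C_def using B c r that by auto
  have "mat_delete M i k = mat_delete C i k" for i
    using M C same_entries by (intro eq_matI) (auto simp: mat_delete_def)
  then have same_cofactors: "cofactor M i k = cofactor C i k" for i
    by (simp add: cofactor_def)
  have "det M = (\<Sum>i<k. M $$ (i, k) * cofactor M i k) + M $$ (k, k) * cofactor M k k"
    using laplace_expansion_column[OF M, of k] by simp
  also have "(\<Sum>i<k. M $$ (i, k) * cofactor M i k) = det C"
  proof -
    have "det C = (\<Sum>i<k. C $$ (i, k) * cofactor C i k) + C $$ (k, k) * cofactor C k k"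
      using laplace_expansion_column[OF C, of k] by simp
    then show ?thesis
      using same_entries same_cofactors B c r by (simp add: C_def)
  qed
  also have "M $$ (k, k) * cofactor M k k = det B"
  proof -
    have "mat_delete M k k = B"
      using M B by (intro eq_matI) (auto simp: mat_delete_def M_def)
    then show ?thesis
      using B c r by (simp add: M_def cofactor_def)
  qed
  finally show ?thesis
    unfolding M_def C_def .
qed

lemma det_add_outer_eq_det_bordered_mat:
  fixes B :: "'a::field mat"
  assumes B: "B \<in> carrier_mat k k" and w: "w \<in> carrier_vec k"
  shows "det (B + mat_of_cols k [w] * mat_of_rows k [w]) = det (bordered_mat B w) + det B"
proof -
  have c: "mat_of_cols k [w] \<in> carrier_mat k 1" and r: "mat_of_rows k [w] \<in> carrier_mat 1 k"
    by auto
  have "det (B + mat_of_cols k [w] * mat_of_rows k [w])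
      = det (four_block_mat B (mat_of_cols k [w]) (- mat_of_rows k [w]) (1\<^sub>m 1))"
    by (rule det_four_block_mat_corner_one[OF B c r, symmetric])
  also have "\<dots> = det (four_block_mat B (mat_of_cols k [w]) (- mat_of_rows k [w]) (0\<^sub>m 1 1)) + det B"
    by (rule det_four_block_mat_corner_split[OF B c uminus_carrier_mat[OF r]])
  also have "four_block_mat B (mat_of_cols k [w]) (- mat_of_rows k [w]) (0\<^sub>m 1 1) = bordered_mat B w"
  proof -
    have "mat_of_rows k [- w] = - mat_of_rows k [w]"
      using w by (intro eq_matI) (auto simp: mat_of_rows_def)
    then show ?thesis
      using B by (simp add: bordered_mat_def)
  qed
  finally show ?thesis .
qed

lemma bordered_mat_carrier:
  assumes "A \<in> carrier_mat n n"
  shows "bordered_mat A v \<in> carrier_mat (n + 1) (n + 1)"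
  using assms unfolding bordered_mat_def by auto

lemma bordered_mat_index:
  assumes "A \<in> carrier_mat n n" "v \<in> carrier_vec n" "i < n + 1" "j < n + 1"
  shows "bordered_mat A v $$ (i, j) =
    (if i < n then if j < n then A $$ (i, j) else v $ i else if j < n then - v $ j else 0)"
  using assms unfolding bordered_mat_def by (auto simp: mat_of_cols_def mat_of_rows_def)

lemma skew_symmetric_bordered_mat:
  assumes A: "A \<in> carrier_mat n n" and skew: "skew_symmetric A" and v: "v \<in> carrier_vec n"
  shows "skew_symmetric (bordered_mat A v)"
proof (rule skew_symmetricI[OF bordered_mat_carrier[OF A]])
  fix i j assume "i < n + 1" "j < n + 1"
  then show "bordered_mat A v $$ (i, j) = - bordered_mat A v $$ (j, i)"
    using skew_symmetricD(1)[OF skew A, of i j] by (simp add: bordered_mat_index[OF A v])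
next
  fix i assume "i < n + 1"
  then show "bordered_mat A v $$ (i, i) = 0"
    using skew_symmetricD(2)[OF skew A, of i] by (simp add: bordered_mat_index[OF A v])
qed

lemma pick_less_if_subset:
  assumes "I \<subseteq> {0..<n}" "i < card I"
  shows "pick I i < n"
  using pick_in_set_le[OF assms(2)] assms(1) by auto

lemma pick_insert_above:
  assumes "I \<subseteq> {0..<n}" "i \<le> card I"
  shows "pick (insert n I) i = (if i < card I then pick I i else n)"
proof -
  have "{a. a < n \<and> a \<in> insert n I} = I" "{a \<in> insert n I. a < n} = I"
    using assms(1) by auto
  then show ?thesis
    using pick_reduce_set[of i n "insert n I"] pick_card_in_set[of n "insert n I"] assms(2)
    by auto
qed

definition subvec :: "'a vec \<Rightarrow> nat set \<Rightarrow> 'a vec" where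
  "subvec v I = vec (card I) (\<lambda>i. v $ pick I i)"

lemma principal_submatrix_carrier:
  assumes "A \<in> carrier_mat n n" "I \<subseteq> {0..<n}"
  shows "principal_submatrix A I \<in> carrier_mat (card I) (card I)"
proof -
  have "{i. i < dim_row A \<and> i \<in> I} = I" "{i. i < dim_col A \<and> i \<in> I} = I"
    using assms by auto
  then show ?thesis
    unfolding principal_submatrix_def by (intro carrier_matI) (simp_all only: dim_submatrix)
qed

lemma principal_submatrix_index:
  assumes "A \<in> carrier_mat n n" "I \<subseteq> {0..<n}" "i < card I" "j < card I"
  shows "principal_submatrix A I $$ (i, j) = A $$ (pick I i, pick I j)"
proof -
  have "{i. i < n \<and> i \<in> I} = I"
    using assms(2) by auto
  then show ?thesis
    unfolding principal_submatrix_def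
    using submatrix_index[of i A I j I] assms(3,4) carrier_matD[OF assms(1)] by simp
qed

lemma skew_symmetric_principal_submatrix:
  assumes A: "A \<in> carrier_mat n n" and skew: "skew_symmetric A" and I: "I \<subseteq> {0..<n}"
  shows "skew_symmetric (principal_submatrix A I)"
proof (rule skew_symmetricI[OF principal_submatrix_carrier[OF A I]])
  fix i j assume "i < card I" "j < card I"
  then show "principal_submatrix A I $$ (i, j) = - principal_submatrix A I $$ (j, i)"
    using skew_symmetricD(1)[OF skew A, of "pick I i" "pick I j"] pick_less_if_subset[OF I]
    by (simp add: principal_submatrix_index[OF A I])
next
  fix i assume "i < card I"
  then show "principal_submatrix A I $$ (i, i) = 0"
    using skew_symmetricD(2)[OF skew A, of "pick I i"] pick_less_if_subset[OF I]
    by (simp add: principal_submatrix_index[OF A I])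
qed

lemma mat_of_cols_mult_mat_of_rows_index:
  assumes "u \<in> carrier_vec m" "v \<in> carrier_vec n" "i < m" "j < n"
  shows "(mat_of_cols m [u] * mat_of_rows n [v]) $$ (i, j) = u $ i * v $ j"
  using assms by (simp add: mat_of_cols_def mat_of_rows_def scalar_prod_def)

lemma principal_submatrix_add_outer:
  assumes A: "A \<in> carrier_mat n n" and v: "v \<in> carrier_vec n" and I: "I \<subseteq> {0..<n}"
  shows "principal_submatrix (A + mat_of_cols n [v] * mat_of_rows n [v]) I
    = principal_submatrix A I + mat_of_cols (card I) [subvec v I] * mat_of_rows (card I) [subvec v I]"
    (is "principal_submatrix ?M I = ?N")
proof -
  have M: "?M \<in> carrier_mat n n"
    using A by auto
  have w: "subvec v I \<in> carrier_vec (card I)"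
    by (simp add: subvec_def)
  have B: "principal_submatrix A I \<in> carrier_mat (card I) (card I)"
    using principal_submatrix_carrier[OF A I] .
  show ?thesis
  proof (rule eq_matI)
    fix i j assume "i < dim_row ?N" "j < dim_col ?N"
    then have ij: "i < card I" "j < card I"
      using B by auto
    then have picks: "pick I i < n" "pick I j < n"
      using pick_less_if_subset[OF I] by auto
    have "principal_submatrix ?M I $$ (i, j) = ?M $$ (pick I i, pick I j)"
      by (rule principal_submatrix_index[OF M I ij])
    also have "\<dots> = A $$ (pick I i, pick I j) + v $ pick I i * v $ pick I j"
      using A picks mat_of_cols_mult_mat_of_rows_index[OF v v] by simp
    also have "\<dots> = ?N $$ (i, j)"
      using B ij principal_submatrix_index[OF A I] mat_of_cols_mult_mat_of_rows_index[OF w w]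
      by (simp add: subvec_def)
    finally show "principal_submatrix ?M I $$ (i, j) = ?N $$ (i, j)" .
  qed (use principal_submatrix_carrier[OF M I] B in auto)
qed

lemma principal_submatrix_bordered_mat:
  assumes A: "A \<in> carrier_mat n n" and v: "v \<in> carrier_vec n" and I: "I \<subseteq> {0..<n}"
  shows "principal_submatrix (bordered_mat A v) I = principal_submatrix A I"
proof -
  have Av: "bordered_mat A v \<in> carrier_mat (n + 1) (n + 1)" and I': "I \<subseteq> {0..<n + 1}"
    using bordered_mat_carrier[OF A] I by auto
  have B: "principal_submatrix A I \<in> carrier_mat (card I) (card I)"
    using principal_submatrix_carrier[OF A I] .
  show ?thesis
  proof (rule eq_matI)
    fix i j assume "i < dim_row (principal_submatrix A I)" "j < dim_col (principal_submatrix A I)"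
    then have ij: "i < card I" "j < card I"
      using B by auto
    then show "principal_submatrix (bordered_mat A v) I $$ (i, j) = principal_submatrix A I $$ (i, j)"
      using principal_submatrix_index[OF Av I' ij] principal_submatrix_index[OF A I ij]
        bordered_mat_index[OF A v] pick_less_if_subset[OF I ij(1)] pick_less_if_subset[OF I ij(2)]
      by simp
  qed (use principal_submatrix_carrier[OF Av I'] B in auto)
qed

lemma principal_submatrix_bordered_mat_insert:
  assumes A: "A \<in> carrier_mat n n" and v: "v \<in> carrier_vec n" and I: "I \<subseteq> {0..<n}"
  shows "principal_submatrix (bordered_mat A v) (insert n I)
    = bordered_mat (principal_submatrix A I) (subvec v I)"
proof -
  have Av: "bordered_mat A v \<in> carrier_mat (n + 1) (n + 1)" and I': "insert n I \<subseteq> {0..<n + 1}"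
    using bordered_mat_carrier[OF A] I by auto
  have card: "card (insert n I) = card I + 1"
    using I finite_subset[OF I] by (subst card_insert_disjoint) auto
  have B: "principal_submatrix A I \<in> carrier_mat (card I) (card I)"
    using principal_submatrix_carrier[OF A I] .
  have w: "subvec v I \<in> carrier_vec (card I)"
    by (simp add: subvec_def)
  have Bw: "bordered_mat (principal_submatrix A I) (subvec v I) \<in> carrier_mat (card I + 1) (card I + 1)"
    using bordered_mat_carrier[OF B] .
  show ?thesis
  proof (rule eq_matI)
    fix i j assume "i < dim_row (bordered_mat (principal_submatrix A I) (subvec v I))"
      "j < dim_col (bordered_mat (principal_submatrix A I) (subvec v I))"
    then have ij: "i < card I + 1" "j < card I + 1"
      using Bw by auto
    then have "principal_submatrix (bordered_mat A v) (insert n I) $$ (i, j)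
        = bordered_mat A v $$ (pick (insert n I) i, pick (insert n I) j)"
      using principal_submatrix_index[OF Av I'] card by simp
    also have "\<dots> = bordered_mat (principal_submatrix A I) (subvec v I) $$ (i, j)"
      unfolding bordered_mat_index[OF B w ij]
      using ij pick_insert_above[OF I, of i] pick_insert_above[OF I, of j]
        pick_less_if_subset[OF I] less_SucI[OF pick_less_if_subset[OF I]]
      by (simp add: bordered_mat_index[OF A v] principal_submatrix_index[OF A I] subvec_def)
    finally show "principal_submatrix (bordered_mat A v) (insert n I) $$ (i, j)
        = bordered_mat (principal_submatrix A I) (subvec v I) $$ (i, j)" .
  qed (use principal_submatrix_carrier[OF Av I'] Bw card in auto)
qed

theorem lemma2p27:
  fixes A :: "'a::field mat" and v :: "'a vec" and n :: nat and I :: "nat set"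
  assumes "A \<in> carrier_mat n n" and "skew_symmetric A"
    and "v \<in> carrier_vec n" and "I \<subseteq> {0..<n}"
  shows "det (principal_submatrix (A + mat_of_cols n [v] * mat_of_rows n [v]) I)
       = det (principal_submatrix (bordered_mat A v) (alpha n I))"
proof -
  define B where "B = principal_submatrix A I"
  define w where "w = subvec v I"
  have B: "B \<in> carrier_mat (card I) (card I)" and w: "w \<in> carrier_vec (card I)"
    using principal_submatrix_carrier[OF assms(1,4)] by (simp_all add: B_def w_def subvec_def)
  have skew_B: "skew_symmetric B"
    unfolding B_def using skew_symmetric_principal_submatrix[OF assms(1,2,4)] .
  have lhs: "det (principal_submatrix (A + mat_of_cols n [v] * mat_of_rows n [v]) I)
      = det (bordered_mat B w) + det B"
    using principal_submatrix_add_outer[OF assms(1,3,4)] det_add_outer_eq_det_bordered_mat[OF B w]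
    by (simp add: B_def w_def)
  show ?thesis
  proof (cases "even (card I)")
    case True
    then have "det (bordered_mat B w) = 0"
      using det_skew_symmetric_odd_eq_0[OF bordered_mat_carrier[OF B]]
        skew_symmetric_bordered_mat[OF B skew_B w] by simp
    with True show ?thesis
      using lhs principal_submatrix_bordered_mat[OF assms(1,3,4)] by (simp add: alpha_def B_def)
  next
    case False
    then have "det B = 0"
      using det_skew_symmetric_odd_eq_0[OF B skew_B] by simp
    with False show ?thesis
      using lhs principal_submatrix_bordered_mat_insert[OF assms(1,3,4)] by (simp add: alpha_def B_def w_def)
  qed
qed

end
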